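(* Let $k$ be a field of characteristic zero, $n\ge3$, $R=k[x_1,\ldots,x_{2n}]$, and $M$ the $2\times n$ generic matrix whose entries are the variables $x_1,\ldots,x_{2n}$. Let $J=I_2(M)$ be the ideal of $2\times2$ minors of $M$ (of height $n-1$), $\Theta$ its Jacobian matrix, and $I=J+I_{n-1}(\Theta)$ the Jacobian ideal of $J$. Then $I_{n-1}(\Theta)=(x_1,\ldots,x_{2n})^{n-1}$ and the pair $J\subseteq I$ is Aluffi torsion-free.
   Context: A pair of ideals $J\subseteq I$ in a ring $R$ is called Aluffi torsion-free if $J\cap I^n=JI^{n-1}$ for all $n\ge1$ (with $I^0=R$). For an ideal $J=(f_1,\ldots,f_t)$ of height $r$ in a polynomial ring, with Jacobian matrix $\Theta=(\partial f_i/\partial x_j)$ and $I_r(\Theta)$ the ideal of $r\times r$ minors of $\Theta$, the Jacobian ideal of $J$ is $J+I_r(\Theta)$. *)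

theory Defs
  imports "HOL-Library.Poly_Mapping" "HOL-Combinatorics.Permutations"
begin

text \<open>Multivariate polynomials over a coefficient ring, in variables indexed by nat
  (variable x_{i+1} of the paper is Var i): maps from monomials (exponent vectors
  nat =>0 nat) to coefficients, with the convolution product of Poly_Mapping.\<close>
type_synonym 'a mpoly = "(nat \<Rightarrow>\<^sub>0 nat) \<Rightarrow>\<^sub>0 'a"

definition Var :: "nat \<Rightarrow> 'a::comm_ring_1 mpoly" where
  "Var i = Poly_Mapping.single (Poly_Mapping.single i 1) 1"

definition pd :: "nat \<Rightarrow> 'a::comm_ring_1 mpoly \<Rightarrow> 'a mpoly" where
  "pd i p = (\<Sum>(m::nat \<Rightarrow>\<^sub>0 nat)\<in>Poly_Mapping.keys p. Poly_Mapping.single (m - Poly_Mapping.single i 1)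
                              (of_nat (Poly_Mapping.lookup m i) * Poly_Mapping.lookup p m))"

definition ideal_gen :: "'a::comm_ring_1 set \<Rightarrow> 'a set" where
  "ideal_gen S = {x. \<exists>F c. finite F \<and> F \<subseteq> S \<and> x = (\<Sum>s\<in>F. c s * s)}"

definition ideal_mult :: "'a::comm_ring_1 set \<Rightarrow> 'a set \<Rightarrow> 'a set" where
  "ideal_mult I K = ideal_gen {a * b | a b. a \<in> I \<and> b \<in> K}"

definition ideal_add :: "'a::comm_ring_1 set \<Rightarrow> 'a set \<Rightarrow> 'a set" where
  "ideal_add I K = ideal_gen (I \<union> K)"

fun ideal_pow :: "'a::comm_ring_1 set \<Rightarrow> nat \<Rightarrow> 'a set" where
  "ideal_pow I 0 = UNIV"
| "ideal_pow I (Suc m) = ideal_mult (ideal_pow I m) I"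

definition aluffi_torsion_free :: "'a::comm_ring_1 set \<Rightarrow> 'a set \<Rightarrow> bool" where
  "aluffi_torsion_free J I \<longleftrightarrow> J \<subseteq> I \<and>
     (\<forall>m\<ge>1. J \<inter> ideal_pow I m = ideal_mult J (ideal_pow I (m - 1)))"

definition minor :: "('r \<Rightarrow> 'c \<Rightarrow> 'a::comm_ring_1) \<Rightarrow> 'r list \<Rightarrow> 'c list \<Rightarrow> 'a" where
  "minor A rs cs = (\<Sum>p | p permutes {..<length rs}.
      of_int (sign p) * (\<Prod>i<length rs. A (rs ! i) (cs ! p i)))"

definition minors_ideal :: "nat \<Rightarrow> 'r set \<Rightarrow> 'c set \<Rightarrow> ('r \<Rightarrow> 'c \<Rightarrow> 'a::comm_ring_1) \<Rightarrow> 'a set" where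
  "minors_ideal r Rows Cols A = ideal_gen {minor A rs cs | rs cs.
      length rs = r \<and> length cs = r \<and> distinct rs \<and> distinct cs \<and>
      set rs \<subseteq> Rows \<and> set cs \<subseteq> Cols}"

definition genmat :: "nat \<Rightarrow> nat \<Rightarrow> nat \<Rightarrow> 'a::comm_ring_1 mpoly" where
  "genmat n r j = (if r = 0 then Var j else Var (n + j))"

definition gmin2 :: "nat \<Rightarrow> nat \<times> nat \<Rightarrow> 'a::comm_ring_1 mpoly" where
  "gmin2 n ij = genmat n 0 (fst ij) * genmat n 1 (snd ij) - genmat n 0 (snd ij) * genmat n 1 (fst ij)"

definition gen_idx :: "nat \<Rightarrow> (nat \<times> nat) set" where
  "gen_idx n = {(i, j). i < j \<and> j < n}"

definition jacobian :: "nat \<Rightarrow> nat \<times> nat \<Rightarrow> nat \<Rightarrow> 'a::comm_ring_1 mpoly" where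
  "jacobian n ij v = pd v (gmin2 n ij)"

end

theory Submission
  imports Defs "HOL-Library.Set_Algebras"
begin

text \<open>Let m be the ideal of the 2n variables. Every entry of the Jacobian matrix of the 2 x 2 minors
  f_ij is 0 or plus or minus a variable, so every (n-1)-minor lies in m^(n-1). Conversely every
  monomial of degree n-1 is, up to sign, a triangular (n-1)-minor: its variables are the edges of a
  spanning tree on the n columns of the generic matrix, and each edge selects a row f_ij and a
  column of the Jacobian. Hence I = J + m^(n-1).

  Torsion-freeness then only uses that J is generated by forms of degree 2 <= n-1: every element
  of I^k is congruent modulo J I^(k-1) to an element of m^((n-1)k), and an element of J all of
  whose monomials have degree at least t+2 already lies in J m^t.

  The Jacobian entries are variables with coefficients plus or minus 1, so the argument works over
  any commutative ring.\<close>

section \<open>Ideals of a commutative ring\<close>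

definition is_ideal :: "'a::comm_ring_1 set \<Rightarrow> bool" where
  "is_ideal T \<longleftrightarrow> 0 \<in> T \<and> (\<forall>x\<in>T. \<forall>y\<in>T. x + y \<in> T) \<and> (\<forall>c. \<forall>x\<in>T. c * x \<in> T)"

lemma is_idealD:
  assumes "is_ideal T"
  shows ideal_zero: "0 \<in> T"
    and ideal_add_closed: "x \<in> T \<Longrightarrow> y \<in> T \<Longrightarrow> x + y \<in> T"
    and ideal_mult_closed: "x \<in> T \<Longrightarrow> c * x \<in> T"
  using assms by (auto simp: is_ideal_def)

lemma ideal_uminus_closed: "is_ideal T \<Longrightarrow> x \<in> T \<Longrightarrow> - x \<in> T"
  by (metis ideal_mult_closed mult_minus1)

lemma ideal_diff_closed: "is_ideal T \<Longrightarrow> x \<in> T \<Longrightarrow> y \<in> T \<Longrightarrow> x - y \<in> T"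
  by (metis ideal_add_closed ideal_uminus_closed diff_conv_add_uminus)

lemma ideal_sum_closed: "is_ideal T \<Longrightarrow> (\<And>i. i \<in> A \<Longrightarrow> f i \<in> T) \<Longrightarrow> sum f A \<in> T"
  by (induction A rule: infinite_finite_induct) (auto intro: ideal_zero ideal_add_closed)

lemma is_ideal_UNIV: "is_ideal UNIV"
  by (simp add: is_ideal_def)

lemma is_ideal_set_plus:
  assumes "is_ideal A" "is_ideal B"
  shows "is_ideal (A + B)"
  unfolding is_ideal_def
proof (intro conjI ballI allI)
  show "0 \<in> A + B"
    using set_plus_intro[OF ideal_zero[OF assms(1)] ideal_zero[OF assms(2)]] by simp
next
  fix x y assume "x \<in> A + B" "y \<in> A + B"
  then obtain a b a' b' where "x = a + b" "y = a' + b'" "a \<in> A" "b \<in> B" "a' \<in> A" "b' \<in> B"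
    by (meson set_plus_elim)
  then show "x + y \<in> A + B"
    using set_plus_intro[of "a + a'" A "b + b'" B] assms
    by (simp add: ideal_add_closed algebra_simps)
next
  fix c x assume "x \<in> A + B"
  then obtain a b where "x = a + b" "a \<in> A" "b \<in> B"
    by (rule set_plus_elim)
  then show "c * x \<in> A + B"
    using set_plus_intro[of "c * a" A "c * b" B] assms
    by (simp add: ideal_mult_closed distrib_left)
qed

lemma ideal_genI: "finite F \<Longrightarrow> F \<subseteq> S \<Longrightarrow> x = (\<Sum>s\<in>F. c s * s) \<Longrightarrow> x \<in> ideal_gen S"
  unfolding ideal_gen_def by blast

lemma ideal_genE:
  assumes "x \<in> ideal_gen S"
  obtains F c where "finite F" "F \<subseteq> S" "x = (\<Sum>s\<in>F. c s * s)"
  using assms unfolding ideal_gen_def by blast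

lemma generator_in_ideal_gen: "s \<in> S \<Longrightarrow> s \<in> ideal_gen S"
  by (rule ideal_genI[of "{s}" _ _ "\<lambda>_. 1"]) auto

lemma ideal_gen_least: "is_ideal T \<Longrightarrow> S \<subseteq> T \<Longrightarrow> ideal_gen S \<subseteq> T"
  by (auto elim!: ideal_genE intro!: ideal_sum_closed ideal_mult_closed)

lemma is_ideal_ideal_gen: "is_ideal (ideal_gen S)"
  unfolding is_ideal_def
proof (intro conjI ballI allI)
  show "0 \<in> ideal_gen S"
    by (rule ideal_genI[of "{}"]) simp_all
next
  fix x y assume "x \<in> ideal_gen S" "y \<in> ideal_gen S"
  obtain F1 c1 where F1: "finite F1" "F1 \<subseteq> S" "x = (\<Sum>s\<in>F1. c1 s * s)"
    using \<open>x \<in> ideal_gen S\<close> by (rule ideal_genE)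
  obtain F2 c2 where F2: "finite F2" "F2 \<subseteq> S" "y = (\<Sum>s\<in>F2. c2 s * s)"
    using \<open>y \<in> ideal_gen S\<close> by (rule ideal_genE)
  let ?c = "\<lambda>s. (if s \<in> F1 then c1 s else 0) + (if s \<in> F2 then c2 s else 0)"
  have "(\<Sum>s\<in>F1 \<union> F2. ?c s * s) =
      (\<Sum>s\<in>F1 \<union> F2. if s \<in> F1 then c1 s * s else 0) + (\<Sum>s\<in>F1 \<union> F2. if s \<in> F2 then c2 s * s else 0)"
    unfolding sum.distrib[symmetric] by (intro sum.cong) (simp_all add: distrib_right)
  also have "\<dots> = x + y"
    using F1 F2 by (simp add: sum.If_cases Int_absorb1)
  finally have "x + y = (\<Sum>s\<in>F1 \<union> F2. ?c s * s)" ..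
  then show "x + y \<in> ideal_gen S"
    using F1 F2 by (intro ideal_genI) auto
next
  fix c x assume "x \<in> ideal_gen S"
  then obtain F d where F: "finite F" "F \<subseteq> S" "x = (\<Sum>s\<in>F. d s * s)"
    by (rule ideal_genE)
  have "c * x = (\<Sum>s\<in>F. (c * d s) * s)"
    unfolding F(3) by (simp add: sum_distrib_left mult.assoc)
  then show "c * x \<in> ideal_gen S"
    using F by (intro ideal_genI)
qed

lemma is_ideal_ideal_mult: "is_ideal (ideal_mult A B)"
  by (simp add: ideal_mult_def is_ideal_ideal_gen)

lemma is_ideal_ideal_pow: "is_ideal (ideal_pow I m)"
  by (cases m) (auto simp: is_ideal_UNIV is_ideal_ideal_mult)

lemma ideal_multI: "a \<in> A \<Longrightarrow> b \<in> B \<Longrightarrow> a * b \<in> ideal_mult A B"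
  unfolding ideal_mult_def by (rule generator_in_ideal_gen) blast

lemma ideal_mult_least:
  "is_ideal T \<Longrightarrow> (\<And>a b. a \<in> A \<Longrightarrow> b \<in> B \<Longrightarrow> a * b \<in> T) \<Longrightarrow> ideal_mult A B \<subseteq> T"
  unfolding ideal_mult_def by (rule ideal_gen_least) auto

lemma ideal_mult_mono: "A \<subseteq> A' \<Longrightarrow> B \<subseteq> B' \<Longrightarrow> ideal_mult A B \<subseteq> ideal_mult A' B'"
  by (rule ideal_mult_least) (auto intro: is_ideal_ideal_mult ideal_multI)

lemma ideal_mult_commute: "ideal_mult A B = ideal_mult B A"
  by (intro subset_antisym ideal_mult_least is_ideal_ideal_mult) (metis ideal_multI mult.commute)+

lemma ideal_mult_subset_left: "is_ideal A \<Longrightarrow> ideal_mult A B \<subseteq> A"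
  by (rule ideal_mult_least, assumption) (metis ideal_mult_closed mult.commute)

lemma ideal_mult_UNIV: "is_ideal A \<Longrightarrow> ideal_mult A UNIV = A"
  by (metis ideal_multI ideal_mult_subset_left mult.right_neutral UNIV_I subsetI subset_antisym)

lemma ideal_mult_assoc_mem:
  assumes "a \<in> ideal_mult A B" "y \<in> C" "\<And>b c. b \<in> B \<Longrightarrow> c \<in> C \<Longrightarrow> b * c \<in> D"
  shows "a * y \<in> ideal_mult A D"
proof -
  have "is_ideal {a. a * y \<in> ideal_mult A D}"
    unfolding is_ideal_def
    by (auto simp: distrib_right mult.assoc intro: ideal_zero ideal_add_closed ideal_mult_closed is_ideal_ideal_mult)
  then have "ideal_mult A B \<subseteq> {a. a * y \<in> ideal_mult A D}"
    by (rule ideal_mult_least) (use assms in \<open>simp add: mult.assoc ideal_multI\<close>)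
  then show ?thesis
    using assms(1) by blast
qed

section \<open>The filtration by degree in the first N variables\<close>

definition mdeg :: "nat \<Rightarrow> (nat \<Rightarrow>\<^sub>0 nat) \<Rightarrow> nat" where
  "mdeg N a = (\<Sum>i<N. Poly_Mapping.lookup a i)"

definition deg_ge :: "nat \<Rightarrow> nat \<Rightarrow> 'a::comm_ring_1 mpoly set" where
  "deg_ge N k = {p. \<forall>a\<in>Poly_Mapping.keys p. k \<le> mdeg N a}"

lemma mdeg_add: "mdeg N (a + b) = mdeg N a + mdeg N b"
  by (simp add: mdeg_def lookup_add sum.distrib)

lemma mdeg_single: "mdeg N (Poly_Mapping.single i c) = (if i < N then c else 0)"
  by (simp add: mdeg_def lookup_single when_def)

lemma deg_geI: "(\<And>a. a \<in> Poly_Mapping.keys p \<Longrightarrow> k \<le> mdeg N a) \<Longrightarrow> p \<in> deg_ge N k"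
  by (simp add: deg_ge_def)

lemma deg_geD: "p \<in> deg_ge N k \<Longrightarrow> a \<in> Poly_Mapping.keys p \<Longrightarrow> k \<le> mdeg N a"
  by (simp add: deg_ge_def)

lemma deg_ge_mult: "p \<in> deg_ge N k \<Longrightarrow> q \<in> deg_ge N l \<Longrightarrow> p * q \<in> deg_ge N (k + l)"
  by (rule deg_geI) (auto dest!: keys_mult[THEN subsetD] simp: mdeg_add deg_geD add_mono)

lemma deg_ge_mult_left: "q \<in> deg_ge N l \<Longrightarrow> p * q \<in> deg_ge N l"
  by (rule deg_geI) (auto dest!: keys_mult[THEN subsetD] simp: mdeg_add deg_geD trans_le_add2)

lemma is_ideal_deg_ge: "is_ideal (deg_ge N k)"
proof -
  have "p + q \<in> deg_ge N k" if "p \<in> deg_ge N k" "q \<in> deg_ge N k" for p q :: "'a mpoly"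
    using that keys_add[of p q] by (force simp: deg_ge_def)
  moreover have "0 \<in> deg_ge N k"
    by (simp add: deg_ge_def)
  ultimately show ?thesis
    by (simp add: is_ideal_def deg_ge_mult_left)
qed

lemma deg_ge_antimono: "k \<le> l \<Longrightarrow> deg_ge N l \<subseteq> deg_ge N k"
  by (auto simp: deg_ge_def)

lemma deg_ge_0: "deg_ge N 0 = UNIV"
  by (simp add: deg_ge_def)

lemma keys_Var: "Poly_Mapping.keys (Var i) = {Poly_Mapping.single i 1}"
  by (simp add: Var_def)

lemma Var_in_deg_ge: "k < N \<Longrightarrow> Var k \<in> deg_ge N 1"
  by (simp add: deg_ge_def keys_Var mdeg_single)

lemma Var_neq_0: "Var i \<noteq> 0"
  by (metis Var_def lookup_single_eq lookup_zero zero_neq_one)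

lemma prod_list_Var_in_deg_ge: "set zs \<subseteq> {..<N} \<Longrightarrow> prod_list (map Var zs) \<in> deg_ge N (length zs)"
proof (induction zs)
  case (Cons z zs)
  then show ?case
    using deg_ge_mult[OF Var_in_deg_ge] by fastforce
qed (simp add: deg_ge_0)

lemma prod_in_deg_ge:
  "finite A \<Longrightarrow> (\<And>i. i \<in> A \<Longrightarrow> f i \<in> deg_ge N 1) \<Longrightarrow> prod f A \<in> deg_ge N (card A)"
proof (induction A rule: finite_induct)
  case (insert x A)
  then show ?case
    using deg_ge_mult[of "f x" N 1 "prod f A" "card A"] by simp
qed (simp add: deg_ge_0)

lemma monomial_factor_Vars:
  assumes "k \<le> mdeg N a"
  obtains zs c where "length zs = k" "set zs \<subseteq> {..<N}"
    "(Poly_Mapping.single a 1 :: 'a::comm_ring_1 mpoly) = c * prod_list (map Var zs)"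
  using assms
proof (induction k arbitrary: a thesis)
  case 0
  then show ?case by simp
next
  case (Suc k)
  then obtain i where i: "i < N" "Poly_Mapping.lookup a i \<noteq> 0"
    by (metis (no_types, lifting) mdeg_def not_less_eq_eq sum.neutral zero_le lessThan_iff)
  define a' where "a' = a - Poly_Mapping.single i 1"
  have a: "a = a' + Poly_Mapping.single i 1"
    using i by (intro poly_mapping_eqI) (auto simp: a'_def lookup_add lookup_minus lookup_single when_def)
  then have "k \<le> mdeg N a'"
    using i Suc.prems(2) by (simp add: mdeg_add mdeg_single)
  then obtain zs c where zs: "length zs = k" "set zs \<subseteq> {..<N}"
    "(Poly_Mapping.single a' 1 :: 'a mpoly) = c * prod_list (map Var zs)"
    using Suc.IH by blast
  have "(Poly_Mapping.single a 1 :: 'a mpoly) = Poly_Mapping.single a' 1 * Var i"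
    by (simp add: a Var_def mult_single)
  also have "\<dots> = c * prod_list (map Var (i # zs))"
    by (simp add: zs(3) ac_simps)
  finally have "(Poly_Mapping.single a 1 :: 'a mpoly) = c * prod_list (map Var (i # zs))" .
  then show ?case
    using zs i by (intro Suc.prems(1)[of "i # zs" c]) auto
qed

lemma deg_ge_subset_ideal:
  assumes T: "is_ideal (T :: 'a::comm_ring_1 mpoly set)"
    and Vars: "\<And>zs. length zs = k \<Longrightarrow> set zs \<subseteq> {..<N} \<Longrightarrow> prod_list (map Var zs) \<in> T"
  shows "deg_ge N k \<subseteq> T"
proof
  fix p :: "'a mpoly" assume p: "p \<in> deg_ge N k"
  have monomial: "(Poly_Mapping.single a 1 :: 'a mpoly) \<in> T" if a: "a \<in> Poly_Mapping.keys p" for a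
  proof -
    obtain zs c where zs: "length zs = k" "set zs \<subseteq> {..<N}"
      "(Poly_Mapping.single a 1 :: 'a mpoly) = c * prod_list (map Var zs)"
      by (rule monomial_factor_Vars[OF deg_geD[OF p a]])
    show ?thesis
      by (simp add: zs(3) ideal_mult_closed[OF T Vars[OF zs(1,2)]])
  qed
  have "p = (\<Sum>a\<in>Poly_Mapping.keys p. Poly_Mapping.single 0 (Poly_Mapping.lookup p a) * Poly_Mapping.single a 1)"
    by (rule poly_mapping_eqI) (simp add: mult_single lookup_sum lookup_single when_def in_keys_iff)
  also have "\<dots> \<in> T"
    using monomial by (intro ideal_sum_closed[OF T] ideal_mult_closed[OF T])
  finally show "p \<in> T" .
qed

definition var_ideal :: "nat \<Rightarrow> 'a::comm_ring_1 mpoly set" where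
  "var_ideal N = ideal_gen (Var ` {..<N})"

lemma prod_list_Var_in_var_ideal_pow:
  "set zs \<subseteq> {..<N} \<Longrightarrow> prod_list (map Var zs) \<in> (ideal_pow (var_ideal N) (length zs) :: 'a::comm_ring_1 mpoly set)"
proof (induction zs)
  case (Cons z zs)
  then have "(prod_list (map Var zs) * Var z :: 'a mpoly) \<in> ideal_mult (ideal_pow (var_ideal N) (length zs)) (var_ideal N)"
    by (intro ideal_multI) (auto simp: var_ideal_def intro: generator_in_ideal_gen)
  then show ?case
    by (simp add: mult.commute)
qed simp

lemma var_ideal_subset_deg_ge: "var_ideal N \<subseteq> deg_ge N 1"
  unfolding var_ideal_def
  by (rule ideal_gen_least[OF is_ideal_deg_ge]) (use Var_in_deg_ge in blast)

lemma deg_ge_eq_ideal_pow: "deg_ge N k = (ideal_pow (var_ideal N) k :: 'a::comm_ring_1 mpoly set)"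
proof (rule subset_antisym)
  show "deg_ge N k \<subseteq> ideal_pow (var_ideal N) k"
    by (rule deg_ge_subset_ideal[OF is_ideal_ideal_pow]) (metis prod_list_Var_in_var_ideal_pow)
  show "ideal_pow (var_ideal N) k \<subseteq> (deg_ge N k :: 'a mpoly set)"
  proof (induction k)
    case (Suc k)
    have "ideal_mult (ideal_pow (var_ideal N) k) (var_ideal N) \<subseteq> (deg_ge N (k + 1) :: 'a mpoly set)"
    proof (rule ideal_mult_least[OF is_ideal_deg_ge])
      fix a b :: "'a mpoly" assume "a \<in> ideal_pow (var_ideal N) k" "b \<in> var_ideal N"
      then show "a * b \<in> deg_ge N (k + 1)"
        using Suc.IH var_ideal_subset_deg_ge deg_ge_mult by blast
    qed
    then show ?case
      by simp
  qed (simp add: deg_ge_0)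
qed

lemma deg_ge_add_subset: "deg_ge N (k + l) \<subseteq> ideal_mult (deg_ge N k) (deg_ge N l)"
proof (rule deg_ge_subset_ideal[OF is_ideal_ideal_mult])
  fix zs :: "nat list" assume zs: "length zs = k + l" "set zs \<subseteq> {..<N}"
  have "prod_list (map Var (take k zs)) * prod_list (map Var (drop k zs)) \<in> ideal_mult (deg_ge N k) (deg_ge N l)"
    using zs prod_list_Var_in_deg_ge[of "take k zs" N] prod_list_Var_in_deg_ge[of "drop k zs" N]
      set_take_subset[of k zs] set_drop_subset[of k zs]
    by (intro ideal_multI) auto
  then show "prod_list (map Var zs) \<in> ideal_mult (deg_ge N k) (deg_ge N l)"
    by (metis append_take_drop_id map_append prod_list.append)
qed

section \<open>Torsion-freeness for homogeneous generators\<close>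

definition homogeneous :: "nat \<Rightarrow> nat \<Rightarrow> 'a::comm_ring_1 mpoly \<Rightarrow> bool" where
  "homogeneous N d p \<longleftrightarrow> (\<forall>a\<in>Poly_Mapping.keys p. mdeg N a = d)"

definition deg_lt :: "nat \<Rightarrow> nat \<Rightarrow> 'a::comm_ring_1 mpoly set" where
  "deg_lt N k = {p. \<forall>a\<in>Poly_Mapping.keys p. mdeg N a < k}"

definition high_part :: "nat \<Rightarrow> nat \<Rightarrow> 'a::comm_ring_1 mpoly \<Rightarrow> 'a mpoly" where
  "high_part N t p = Poly_Mapping.mapp (\<lambda>a v. if t \<le> mdeg N a then v else 0) p"

lemma homogeneous_in_deg_ge: "homogeneous N d p \<Longrightarrow> p \<in> deg_ge N d"
  by (simp add: homogeneous_def deg_ge_def)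

lemma lookup_high_part:
  "Poly_Mapping.lookup (high_part N t p) a = (if t \<le> mdeg N a then Poly_Mapping.lookup p a else 0)"
  by (simp add: high_part_def lookup_mapp when_def in_keys_iff)

lemma high_part_in_deg_ge: "high_part N t p \<in> deg_ge N t"
  by (rule deg_geI) (simp add: in_keys_iff lookup_high_part split: if_splits)

lemma low_part_in_deg_lt: "p - high_part N t p \<in> deg_lt N t"
  unfolding deg_lt_def
  by (auto simp: in_keys_iff lookup_minus lookup_high_part split: if_splits)

lemma deg_lt_sum: "(\<And>i. i \<in> A \<Longrightarrow> f i \<in> deg_lt N k) \<Longrightarrow> sum f A \<in> deg_lt N k"
proof (induction A rule: infinite_finite_induct)
  case (insert x F)
  then show ?case
    using keys_add[of "f x" "sum f F"] by (force simp: deg_lt_def)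
qed (simp_all add: deg_lt_def)

lemma deg_lt_mult_homogeneous:
  "p \<in> deg_lt N t \<Longrightarrow> homogeneous N d s \<Longrightarrow> p * s \<in> deg_lt N (t + d)"
  unfolding deg_lt_def homogeneous_def
  by (force dest!: keys_mult[THEN subsetD] simp: mdeg_add)

lemma deg_ge_inter_deg_lt: "p \<in> deg_ge N k \<Longrightarrow> p \<in> deg_lt N k \<Longrightarrow> p = 0"
  unfolding deg_ge_def deg_lt_def
  by (metis (mono_tags, lifting) keys_eq_empty ex_in_conv mem_Collect_eq not_le)

text \<open>Split each coefficient of an element of the ideal into its part of degree at least t and
  the rest; the rest contributes only monomials of degree below t + d, so it cancels.\<close>

lemma ideal_gen_homogeneous_inter_deg_ge:
  fixes G :: "'a::comm_ring_1 mpoly set"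
  assumes hom: "\<And>g. g \<in> G \<Longrightarrow> homogeneous N d g"
    and x: "x \<in> ideal_gen G" "x \<in> deg_ge N (t + d)"
  shows "x \<in> ideal_mult (ideal_gen G) (deg_ge N t)"
proof -
  obtain F c where F: "finite F" "F \<subseteq> G" "x = (\<Sum>s\<in>F. c s * s)"
    using x(1) by (rule ideal_genE)
  define high where "high = (\<Sum>s\<in>F. high_part N t (c s) * s)"
  define low where "low = (\<Sum>s\<in>F. (c s - high_part N t (c s)) * s)"
  have x_split: "x = high + low"
    unfolding F(3) high_def low_def by (simp add: sum.distrib[symmetric] algebra_simps)
  have high_mult: "high \<in> ideal_mult (ideal_gen G) (deg_ge N t)"
    unfolding high_def using F(2)
    by (intro ideal_sum_closed[OF is_ideal_ideal_mult])
      (metis ideal_multI generator_in_ideal_gen high_part_in_deg_ge mult.commute subsetD)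
  have "high \<in> deg_ge N (t + d)"
    unfolding high_def using F(2) hom
    by (intro ideal_sum_closed[OF is_ideal_deg_ge])
      (blast intro: deg_ge_mult high_part_in_deg_ge homogeneous_in_deg_ge)
  then have "low \<in> deg_ge N (t + d)"
    using ideal_diff_closed[OF is_ideal_deg_ge x(2)] x_split by (metis add_diff_cancel_left')
  moreover have "low \<in> deg_lt N (t + d)"
    unfolding low_def using F(2) hom
    by (intro deg_lt_sum) (blast intro: deg_lt_mult_homogeneous low_part_in_deg_lt)
  ultimately have "low = 0"
    by (rule deg_ge_inter_deg_lt)
  then show ?thesis
    using x_split high_mult by simp
qed

lemma deg_ge_mult_subset_ideal_pow:
  assumes "deg_ge N d \<subseteq> I"
  shows "deg_ge N (d * m) \<subseteq> ideal_pow I m"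
proof (induction m)
  case (Suc m)
  have "deg_ge N (d * Suc m) \<subseteq> ideal_mult (deg_ge N (d * m)) (deg_ge N d)"
    using deg_ge_add_subset[of N "d * m" d] by (simp add: add.commute)
  also have "\<dots> \<subseteq> ideal_mult (ideal_pow I m) I"
    using Suc.IH assms by (rule ideal_mult_mono)
  finally show ?case
    by simp
qed (simp add: deg_ge_0)

lemma ideal_add_subset_set_plus: "is_ideal A \<Longrightarrow> is_ideal B \<Longrightarrow> ideal_add A B \<subseteq> A + B"
  unfolding ideal_add_def
  by (rule ideal_gen_least[OF is_ideal_set_plus])
    (auto intro: set_plus_intro[of _ A 0 B, simplified] set_plus_intro[of 0 A _ B, simplified] ideal_zero)

lemma ideal_pow_ideal_add_deg_ge:
  fixes J :: "'a::comm_ring_1 mpoly set" and N d :: nat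
  assumes J: "is_ideal J"
  defines "I \<equiv> ideal_add J (deg_ge N d)"
  shows "ideal_pow I (Suc k) \<subseteq> ideal_mult J (ideal_pow I k) + deg_ge N (d * Suc k)"
proof (induction k)
  have I: "I \<subseteq> J + deg_ge N d"
    unfolding I_def using J is_ideal_deg_ge by (rule ideal_add_subset_set_plus)
  have "ideal_pow I (Suc 0) = ideal_mult I UNIV"
    by (simp add: ideal_mult_commute)
  also have "\<dots> \<subseteq> I"
    unfolding I_def ideal_add_def by (rule ideal_mult_subset_left[OF is_ideal_ideal_gen])
  finally show "ideal_pow I (Suc 0) \<subseteq> ideal_mult J (ideal_pow I 0) + deg_ge N (d * Suc 0)"
    using I by (simp add: ideal_mult_UNIV[OF J])
next
  case (Suc k)
  have I: "I \<subseteq> J + deg_ge N d" and deg_ge_I: "deg_ge N d \<subseteq> I"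
    unfolding I_def ideal_add_def
    using ideal_add_subset_set_plus[OF J is_ideal_deg_ge] by (auto simp: ideal_add_def intro: generator_in_ideal_gen)
  have "ideal_mult (ideal_pow I (Suc k)) I \<subseteq> ideal_mult J (ideal_pow I (Suc k)) + deg_ge N (d * Suc (Suc k))"
  proof (rule ideal_mult_least[OF is_ideal_set_plus[OF is_ideal_ideal_mult is_ideal_deg_ge]])
    fix x y assume x: "x \<in> ideal_pow I (Suc k)" and y: "y \<in> I"
    obtain a b where ab: "x = a + b" "a \<in> ideal_mult J (ideal_pow I k)" "b \<in> deg_ge N (d * Suc k)"
      using Suc.IH x by (blast elim: set_plus_elim)
    obtain a' b' where ab': "y = a' + b'" "a' \<in> J" "b' \<in> deg_ge N d"
      using I y by (blast elim: set_plus_elim)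
    have "a * y \<in> ideal_mult J (ideal_pow I (Suc k))"
      using ab(2) y by (rule ideal_mult_assoc_mem) (simp add: ideal_multI)
    moreover have "a' * b \<in> ideal_mult J (ideal_pow I (Suc k))"
      using ab'(2) subsetD[OF deg_ge_mult_subset_ideal_pow[OF deg_ge_I] ab(3)] by (rule ideal_multI)
    moreover have "b * b' \<in> deg_ge N (d * Suc (Suc k))"
      using deg_ge_mult[OF ab(3) ab'(3)] by (simp add: algebra_simps)
    moreover have "x * y = (a * y + a' * b) + b * b'"
      using ab ab' by (simp add: algebra_simps)
    ultimately show "x * y \<in> ideal_mult J (ideal_pow I (Suc k)) + deg_ge N (d * Suc (Suc k))"
      by (metis set_plus_intro ideal_add_closed[OF is_ideal_ideal_mult])
  qed
  then show ?case
    by simp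
qed

lemma ideal_gen_inter_ideal_pow_subset:
  fixes G :: "'a::comm_ring_1 mpoly set" and N d e :: nat
  assumes hom: "\<And>g. g \<in> G \<Longrightarrow> homogeneous N e g" and "e \<le> d"
  defines "J \<equiv> ideal_gen G"
  defines "I \<equiv> ideal_add J (deg_ge N d)"
  shows "J \<inter> ideal_pow I (Suc k) \<subseteq> ideal_mult J (ideal_pow I k)"
proof
  have J: "is_ideal J"
    unfolding J_def by (rule is_ideal_ideal_gen)
  have deg_ge_I: "deg_ge N d \<subseteq> I"
    unfolding I_def ideal_add_def by (auto intro: generator_in_ideal_gen)
  fix x assume x: "x \<in> J \<inter> ideal_pow I (Suc k)"
  then have "x \<in> ideal_mult J (ideal_pow I k) + deg_ge N (d * Suc k)"
    using ideal_pow_ideal_add_deg_ge[OF J, of N d k] unfolding I_def by blast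
  then obtain a b where ab: "x = a + b" "a \<in> ideal_mult J (ideal_pow I k)" "b \<in> deg_ge N (d * Suc k)"
    by (rule set_plus_elim)
  have "b \<in> J"
    using ideal_diff_closed[OF J _ subsetD[OF ideal_mult_subset_left[OF J] ab(2)]] x ab(1)
    by (metis IntD1 add_diff_cancel_left')
  moreover have "b \<in> deg_ge N ((d * Suc k - e) + e)"
    using ab(3) \<open>e \<le> d\<close> by simp
  ultimately have "b \<in> ideal_mult J (deg_ge N (d * Suc k - e))"
    unfolding J_def using hom by (blast intro: ideal_gen_homogeneous_inter_deg_ge)
  also have "\<dots> \<subseteq> ideal_mult J (ideal_pow I k)"
    using \<open>e \<le> d\<close>
    by (intro ideal_mult_mono order.refl subset_trans[OF deg_ge_antimono deg_ge_mult_subset_ideal_pow[OF deg_ge_I]])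
      simp
  finally show "x \<in> ideal_mult J (ideal_pow I k)"
    using ab(1,2) ideal_add_closed[OF is_ideal_ideal_mult] by simp
qed

lemma aluffi_torsion_free_ideal_add_deg_ge:
  fixes G :: "'a::comm_ring_1 mpoly set" and N d e :: nat
  assumes hom: "\<And>g. g \<in> G \<Longrightarrow> homogeneous N e g" and "e \<le> d"
  defines "J \<equiv> ideal_gen G"
  defines "I \<equiv> ideal_add J (deg_ge N d)"
  shows "aluffi_torsion_free J I"
  unfolding aluffi_torsion_free_def
proof (intro conjI allI impI)
  show JI: "J \<subseteq> I"
    unfolding I_def ideal_add_def by (auto intro: generator_in_ideal_gen)
  fix m :: nat assume "1 \<le> m"
  then obtain k where m: "m = Suc k"
    using not0_implies_Suc by fastforce
  have "ideal_mult J (ideal_pow I k) \<subseteq> ideal_mult (ideal_pow I k) I"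
    using ideal_mult_commute ideal_mult_mono[OF JI order.refl] by metis
  then have "ideal_mult J (ideal_pow I k) \<subseteq> J \<inter> ideal_pow I (Suc k)"
    using ideal_mult_subset_left[OF is_ideal_ideal_gen, of G] unfolding J_def by auto
  then show "J \<inter> ideal_pow I m = ideal_mult J (ideal_pow I (m - 1))"
    using ideal_gen_inter_ideal_pow_subset[OF hom \<open>e \<le> d\<close>, where k = k] unfolding m J_def I_def by auto
qed

section \<open>Minors\<close>

lemma permutes_decreasing_eq_id:
  fixes p :: "nat \<Rightarrow> nat"
  assumes p: "p permutes {..<L}" and le: "\<And>i. i < L \<Longrightarrow> p i \<le> i"
  shows "p = id"
proof -
  have "p i = i" if i: "i < L" for i
  proof (rule ccontr)
    assume "p i \<noteq> i"
    then have "sum p {..<L} < sum id {..<L}"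
      using le i by (intro sum_strict_mono_ex1) (auto intro!: bexI[of _ i] simp: le_neq_implies_less)
    moreover have "sum p {..<L} = sum id {..<L}"
      using sum.reindex_bij_betw[OF permutes_imp_bij[OF p], of id] by simp
    ultimately show False
      by simp
  qed
  then show ?thesis
    using permutes_not_in[OF p] by (metis eq_id_iff lessThan_iff)
qed

lemma minor_lower_triangular:
  assumes "length rs = L" "length cs = L"
    and tri: "\<And>i j. i < L \<Longrightarrow> j < L \<Longrightarrow> i < j \<Longrightarrow> A (rs ! i) (cs ! j) = 0"
  shows "minor A rs cs = (\<Prod>i<L. A (rs ! i) (cs ! i))"
proof -
  let ?f = "\<lambda>p. of_int (sign p) * (\<Prod>i<L. A (rs ! i) (cs ! p i))"
  have "?f p = 0" if p: "p permutes {..<L}" "p \<noteq> id" for p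
  proof -
    obtain i where i: "i < L" "i < p i"
      using permutes_decreasing_eq_id[OF p(1)] p(2) not_le by blast
    then have "A (rs ! i) (cs ! p i) = 0"
      using tri permutes_in_image[OF p(1)] by simp
    then have "(\<Prod>i<L. A (rs ! i) (cs ! p i)) = 0"
      using i(1) by (intro prod_zero) auto
    then show ?thesis
      by simp
  qed
  then have "minor A rs cs = ?f id"
    unfolding minor_def assms(1)
    by (subst sum.remove[of _ id]) (auto simp: finite_permutations permutes_id intro!: sum.neutral)
  then show ?thesis
    by simp
qed

lemma prod_lessThan_plus_minus:
  fixes L :: nat
  shows "(\<And>i. i < L \<Longrightarrow> f i = g i \<or> f i = - g i) \<Longrightarrow>
    prod f {..<L} = prod g {..<L} \<or> prod f {..<L} = - (prod g {..<L} :: 'a::comm_ring_1)"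
proof (induction L)
  case (Suc L)
  then have "prod f {..<L} = prod g {..<L} \<or> prod f {..<L} = - prod g {..<L}"
    and "f L = g L \<or> f L = - g L"
    by simp_all
  then show ?case
    by (auto simp: prod.lessThan_Suc)
qed simp

lemma minors_ideal_subset_deg_ge:
  assumes "\<And>r c. r \<in> Rows \<Longrightarrow> A r c \<in> deg_ge N 1"
  shows "minors_ideal L Rows Cols A \<subseteq> deg_ge N L"
  unfolding minors_ideal_def
proof (rule ideal_gen_least[OF is_ideal_deg_ge], rule subsetI)
  fix x assume "x \<in> {minor A rs cs | rs cs. length rs = L \<and> length cs = L \<and>
    distinct rs \<and> distinct cs \<and> set rs \<subseteq> Rows \<and> set cs \<subseteq> Cols}"
  then obtain rs cs where x: "x = minor A rs cs" and rs: "length rs = L" "set rs \<subseteq> Rows"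
    by blast
  then have "(\<Prod>i<L. A (rs ! i) (cs ! p i)) \<in> deg_ge N L" for p
    using prod_in_deg_ge[of "{..<L}" "\<lambda>i. A (rs ! i) (cs ! p i)" N] assms nth_mem by fastforce
  then show "x \<in> deg_ge N L"
    unfolding x minor_def rs(1)
    by (intro ideal_sum_closed[OF is_ideal_deg_ge] ideal_mult_closed[OF is_ideal_deg_ge])
qed

lemma prod_diagonal_in_minors_ideal:
  fixes A :: "'r \<Rightarrow> 'c \<Rightarrow> 'a::comm_ring_1"
  assumes len: "length rs = L" "length cs = L" and sub: "set rs \<subseteq> Rows" "set cs \<subseteq> Cols"
    and "distinct cs"
    and tri: "\<And>i j. i < L \<Longrightarrow> j < L \<Longrightarrow> i < j \<Longrightarrow> A (rs ! i) (cs ! j) = 0"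
    and diag: "\<And>i. i < L \<Longrightarrow> A (rs ! i) (cs ! i) = d i \<or> A (rs ! i) (cs ! i) = - d i"
    and nonzero: "\<And>i. i < L \<Longrightarrow> d i \<noteq> 0"
  shows "(\<Prod>i<L. d i) \<in> minors_ideal L Rows Cols A"
proof -
  have neq: "rs ! i \<noteq> rs ! j" if "i < j" "j < L" for i j
  proof
    assume "rs ! i = rs ! j"
    then have "A (rs ! j) (cs ! j) = 0"
      using tri[of i j] that by simp
    with diag[of j] that(2) have "d j = 0"
      by (metis neg_equal_0_iff_equal)
    with nonzero[of j] that(2) show False
      by simp
  qed
  have "distinct rs"
    unfolding distinct_conv_nth len(1)
    using neq by (metis linorder_neqE_nat)
  then have "minor A rs cs \<in> {minor A rs cs | rs cs. length rs = L \<and> length cs = L \<and>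
      distinct rs \<and> distinct cs \<and> set rs \<subseteq> Rows \<and> set cs \<subseteq> Cols}"
    using len sub \<open>distinct cs\<close> by blast
  then have minor: "minor A rs cs \<in> minors_ideal L Rows Cols A"
    unfolding minors_ideal_def by (rule generator_in_ideal_gen)
  have "minor A rs cs = (\<Prod>i<L. d i) \<or> minor A rs cs = - (\<Prod>i<L. d i)"
    using minor_lower_triangular[of rs L cs A, OF len tri] prod_lessThan_plus_minus[OF diag] by simp
  then show ?thesis
  proof
    assume "minor A rs cs = - (\<Prod>i<L. d i)"
    moreover have "- minor A rs cs \<in> minors_ideal L Rows Cols A"
      using minor unfolding minors_ideal_def by (rule ideal_uminus_closed[OF is_ideal_ideal_gen])
    ultimately show ?thesis
      by simp
  qed (use minor in simp)
qed

text \<open>Read each z in H as an edge joining v z to a vertex of U that is still to be chosen. The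
  enumeration grows a spanning forest rooted in K: the i-th edge attaches the i-th vertex of U to
  K or to a vertex enumerated before it.\<close>

lemma spanning_enumeration:
  fixes v :: "'b \<Rightarrow> 'a"
  assumes "finite U" "U \<inter> K = {}" "size H = card U" "\<forall>z\<in>#H. v z \<in> K \<union> U"
    "H \<noteq> {#} \<longrightarrow> (\<exists>z\<in>#H. v z \<in> K)"
  obtains cs zs where "distinct cs" "set cs = U" "mset zs = H"
    "\<And>i. i < card U \<Longrightarrow> v (zs ! i) \<in> K \<union> set (take i cs)"
  using assms
proof (induction "card U" arbitrary: U K H thesis)
  case 0
  then show ?case
    by (metis card_0_eq distinct.simps(1) empty_set mset_zero_iff size_eq_0_iff_empty not_less_zero)
next
  case (Suc k)
  then obtain h where h: "h \<in># H" "v h \<in> K"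
    by (metis size_eq_0_iff_empty nat.distinct(1))
  let ?H = "H - {#h#}"
  have "U \<noteq> {}"
    using Suc.hyps by auto
  then obtain u where u: "u \<in> U" "?H \<noteq> {#} \<longrightarrow> (\<exists>z\<in>#?H. v z \<in> K \<union> {u})"
  proof (cases "\<exists>z\<in>#?H. v z \<in> U")
    case True
    then show ?thesis
      using that by blast
  next
    case False
    then show ?thesis
      using that Suc.prems(5) \<open>U \<noteq> {}\<close>
      by (metis Un_iff all_not_in_conv in_diffD multiset_nonemptyE)
  qed
  have card: "k = card (U - {u})"
    using Suc.hyps(2) Suc.prems(2) u(1) by simp
  obtain cs zs where IH: "distinct cs" "set cs = U - {u}" "mset zs = ?H"
    "\<And>i. i < k \<Longrightarrow> v (zs ! i) \<in> (K \<union> {u}) \<union> set (take i cs)"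
  proof (rule Suc.hyps(1)[OF card])
    show "finite (U - {u})" "(U - {u}) \<inter> (K \<union> {u}) = {}"
      using Suc.prems(2,3) by auto
    show "size ?H = card (U - {u})"
      using Suc.hyps(2) Suc.prems(4) h(1) card by (simp add: size_Diff_singleton)
    show "\<forall>z\<in>#?H. v z \<in> (K \<union> {u}) \<union> (U - {u})"
      using Suc.prems(5) by (auto dest: in_diffD)
  qed (use u(2) card in auto)
  show ?case
  proof (rule Suc.prems(1)[of "u # cs" "h # zs"])
    show "distinct (u # cs)" "set (u # cs) = U" "mset (h # zs) = H"
      using IH u(1) h(1) by auto
    show "v ((h # zs) ! i) \<in> K \<union> set (take i (u # cs))" if "i < card U" for i
      using that h(2) IH(4)[of "i - 1"] Suc.hyps(2) card by (cases i) auto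
  qed
qed

section \<open>The Jacobian matrix of the generic 2 x 2 minors\<close>

lemma gmin2_eq_monomials:
  "gmin2 n (i, j) = Poly_Mapping.single (Poly_Mapping.single i 1 + Poly_Mapping.single (n + j) 1) 1
     - Poly_Mapping.single (Poly_Mapping.single j 1 + Poly_Mapping.single (n + i) 1) 1"
  by (simp add: gmin2_def genmat_def Var_def mult_single)

lemma keys_gmin2:
  "Poly_Mapping.keys (gmin2 n (i, j)) \<subseteq>
    {Poly_Mapping.single i 1 + Poly_Mapping.single (n + j) 1, Poly_Mapping.single j 1 + Poly_Mapping.single (n + i) 1}"
  unfolding gmin2_eq_monomials using keys_diff by fastforce

lemma gmin2_homogeneous:
  assumes "i < n" "j < n"
  shows "homogeneous (2 * n) 2 (gmin2 n (i, j))"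
  unfolding homogeneous_def using assms keys_gmin2 by (fastforce simp: mdeg_add mdeg_single)

lemma pd_eq_sum_superset:
  assumes "finite S" "Poly_Mapping.keys p \<subseteq> S"
  shows "pd i p = (\<Sum>m\<in>S. Poly_Mapping.single (m - Poly_Mapping.single i 1)
                              (of_nat (Poly_Mapping.lookup m i) * Poly_Mapping.lookup p m))"
  unfolding pd_def by (rule sum.mono_neutral_left) (use assms in \<open>auto simp: in_keys_iff\<close>)

lemma jacobian_gmin2:
  assumes "i < j" "j < n"
  shows "jacobian n (i, j) w = (if w = i then Var (n + j) else if w = n + j then Var i
     else if w = j then - Var (n + i) else if w = n + i then - Var j else 0)"
proof -
  let ?e = "\<lambda>k. Poly_Mapping.single k (1::nat)"
  let ?A = "?e i + ?e (n + j)" and ?B = "?e j + ?e (n + i)"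
  have "Poly_Mapping.lookup ?A i \<noteq> Poly_Mapping.lookup ?B i"
    using assms by (simp add: lookup_add lookup_single)
  then have "?A \<noteq> ?B"
    by metis
  have "jacobian n (i, j) w = (\<Sum>m\<in>{?A, ?B}. Poly_Mapping.single (m - ?e w)
      (of_nat (Poly_Mapping.lookup m w) * Poly_Mapping.lookup (gmin2 n (i, j)) m))"
    unfolding jacobian_def using keys_gmin2 by (intro pd_eq_sum_superset) auto
  also have "\<dots> = Poly_Mapping.single (?A - ?e w) (of_nat (Poly_Mapping.lookup ?A w))
      - Poly_Mapping.single (?B - ?e w) (of_nat (Poly_Mapping.lookup ?B w))"
    using \<open>?A \<noteq> ?B\<close>
    by (simp add: gmin2_eq_monomials lookup_minus lookup_single when_def single_uminus)
  finally show ?thesis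
    using assms by (auto simp: Var_def lookup_add lookup_single when_def single_uminus)
qed

definition edge :: "nat \<Rightarrow> nat \<Rightarrow> nat \<times> nat" where
  "edge c h = (min c h, max c h)"

text \<open>The Jacobian column of the entry in column c of the generic matrix that lies in the row not
  containing the variable z.\<close>

definition partner_col :: "nat \<Rightarrow> nat \<Rightarrow> nat \<Rightarrow> nat" where
  "partner_col n z c = (if z < n then n + c else c)"

lemma edge_in_gen_idx: "c < n \<Longrightarrow> h < n \<Longrightarrow> c \<noteq> h \<Longrightarrow> edge c h \<in> gen_idx n"
  by (auto simp: edge_def gen_idx_def min_def max_def)

lemma partner_col_mod: "c < n \<Longrightarrow> partner_col n z c mod n = c"
  by (simp add: partner_col_def)

lemma jacobian_edge_partner_col:
  assumes "c < n" "z < 2 * n" "c \<noteq> z mod n"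
  shows "jacobian n (edge c (z mod n)) (partner_col n z c) = Var z
    \<or> jacobian n (edge c (z mod n)) (partner_col n z c) = - Var z"
proof (cases "z < n")
  case True
  then show ?thesis
    using assms by (auto simp: edge_def partner_col_def min_def max_def jacobian_gmin2)
next
  case False
  then have "z = n + z mod n"
    using assms(2) by (simp add: le_mod_geq)
  then show ?thesis
    using assms False
    by (auto simp: edge_def partner_col_def min_def max_def jacobian_gmin2 not_less)
qed

lemma jacobian_edge_other_col:
  assumes "c < n" "h < n" "c \<noteq> h" "c' < n" "c' \<noteq> c" "c' \<noteq> h"
  shows "jacobian n (edge c h) (partner_col n z c') = 0"
  using assms by (auto simp: edge_def partner_col_def min_def max_def jacobian_gmin2)

lemma jacobian_in_deg_ge: "ij \<in> gen_idx n \<Longrightarrow> jacobian n ij w \<in> deg_ge (2 * n) 1"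
  by (auto simp: gen_idx_def jacobian_gmin2
      intro!: Var_in_deg_ge[simplified] ideal_uminus_closed[OF is_ideal_deg_ge] ideal_zero[OF is_ideal_deg_ge])

text \<open>Row i of the minor is the generator on the columns c_i and z_i mod n, column i the entry of
  column c_i in the row of the generic matrix not containing z_i; the entry there is plus or minus
  the variable z_i. As z_i mod n is r or an earlier c_k, the later columns c_j miss both columns
  of row i.\<close>

lemma spanning_tree_minor_in_jacobian_minors:
  assumes "0 < n" and cs: "distinct cs" "length cs = L" "\<And>i. i < L \<Longrightarrow> cs ! i < n" "r \<notin> set cs"
    and zs: "length zs = L" "\<And>i. i < L \<Longrightarrow> zs ! i < 2 * n"
    and tree: "\<And>i. i < L \<Longrightarrow> zs ! i mod n \<in> {r} \<union> set (take i cs)"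
  shows "(\<Prod>i<L. Var (zs ! i)) \<in> minors_ideal L (gen_idx n) {..<2 * n} (jacobian n)"
proof -
  have fresh: "cs ! j \<notin> {r} \<union> set (take i cs)" if "i \<le> j" "j < L" for i j
    using cs that by (auto simp: in_set_conv_nth distinct_conv_nth)
  have mod_lt: "zs ! i mod n < n" for i
    using \<open>0 < n\<close> by simp
  have not_loop: "cs ! i \<noteq> zs ! i mod n" if "i < L" for i
    using tree[OF that] fresh[OF order.refl that] by auto
  have not_later: "cs ! j \<noteq> cs ! i" "cs ! j \<noteq> zs ! i mod n" if "i < j" "j < L" for i j
    using cs(1,2) tree[of i] fresh[of i j] that by (auto simp: nth_eq_iff_index_eq)
  define rows where "rows = map (\<lambda>i. edge (cs ! i) (zs ! i mod n)) [0..<L]"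
  define cols where "cols = map (\<lambda>i. partner_col n (zs ! i) (cs ! i)) [0..<L]"
  show ?thesis
  proof (rule prod_diagonal_in_minors_ideal)
    show "length rows = L" "length cols = L"
      by (simp_all add: rows_def cols_def)
    show "set rows \<subseteq> gen_idx n"
      unfolding rows_def using cs(3) mod_lt not_loop by (auto intro!: edge_in_gen_idx)
    have "cs ! i < 2 * n" if "i < L" for i
      using cs(3)[OF that] by simp
    then show "set cols \<subseteq> {..<2 * n}"
      unfolding cols_def using cs(3) by (auto simp: partner_col_def)
    show "distinct cols"
      unfolding cols_def distinct_map
    proof (intro conjI inj_onI)
      fix i j assume ij: "i \<in> set [0..<L]" "j \<in> set [0..<L]"
        and eq: "partner_col n (zs ! i) (cs ! i) = partner_col n (zs ! j) (cs ! j)"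
      then have "i < L" "j < L"
        by auto
      then have "cs ! i = cs ! j"
        using arg_cong[OF eq, of "\<lambda>c. c mod n"] partner_col_mod[OF cs(3)] by metis
      then show "i = j"
        using cs(1,2) ij by (simp add: nth_eq_iff_index_eq)
    qed simp
    show "jacobian n (rows ! i) (cols ! j) = 0" if "i < L" "j < L" "i < j" for i j
      unfolding rows_def cols_def using that
      by (simp add: jacobian_edge_other_col cs(3) mod_lt not_loop not_later)
    show "jacobian n (rows ! i) (cols ! i) = Var (zs ! i) \<or> jacobian n (rows ! i) (cols ! i) = - Var (zs ! i)"
      if "i < L" for i
      unfolding rows_def cols_def using that
      by (simp add: jacobian_edge_partner_col cs(3) zs(2) not_loop)
    show "Var (zs ! i) \<noteq> 0" for i
      by (rule Var_neq_0)
  qed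
qed

lemma prod_list_Var_in_jacobian_minors:
  assumes "2 \<le> n" "length zs0 = n - 1" "set zs0 \<subseteq> {..<2 * n}"
  shows "prod_list (map Var zs0) \<in> minors_ideal (n - 1) (gen_idx n) {..<2 * n} (jacobian n)"
proof -
  define r where "r = hd zs0 mod n"
  have "r < n"
    using assms(1) by (simp add: r_def)
  then have card: "card ({..<n} - {r}) = n - 1"
    by simp
  have "\<forall>z\<in>#mset zs0. z mod n \<in> {r} \<union> ({..<n} - {r})"
    using assms(1) by auto
  moreover have "mset zs0 \<noteq> {#} \<longrightarrow> (\<exists>z\<in>#mset zs0. z mod n \<in> {r})"
    by (auto simp: r_def intro!: bexI[of _ "hd zs0"])
  moreover have "size (mset zs0) = card ({..<n} - {r})"
    using assms(2) card by simp
  ultimately obtain cs zs where cs: "distinct cs" "set cs = {..<n} - {r}" and zs: "mset zs = mset zs0"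
    and tree: "\<And>i. i < card ({..<n} - {r}) \<Longrightarrow> zs ! i mod n \<in> {r} \<union> set (take i cs)"
    using spanning_enumeration[of "{..<n} - {r}" "{r}" "mset zs0" "\<lambda>z. z mod n"] by blast
  have len: "length cs = n - 1" "length zs = n - 1"
    using distinct_card[OF cs(1)] cs(2) card zs assms(2) by (simp, metis size_mset)
  have "(\<Prod>i<n - 1. Var (zs ! i)) \<in> minors_ideal (n - 1) (gen_idx n) {..<2 * n} (jacobian n)"
  proof (rule spanning_tree_minor_in_jacobian_minors)
    show "cs ! i < n" if "i < n - 1" for i
      using nth_mem[of i cs] len(1) that unfolding cs(2) by simp
    show "zs ! i < 2 * n" if "i < n - 1" for i
      using nth_mem[of i zs] len(2) that assms(3) unfolding set_mset_mset[symmetric] zs by auto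
  qed (use assms(1) cs len tree card in auto)
  also have "(\<Prod>i<n - 1. Var (zs ! i)) = prod_list (map Var zs)"
    by (simp add: prod.list_conv_set_nth len(2) atLeast0LessThan)
  also have "\<dots> = prod_list (map Var zs0)"
    by (metis zs mset_map prod_mset_prod_list)
  finally show ?thesis .
qed

lemma jacobian_minors_ideal_eq_deg_ge:
  assumes "2 \<le> n"
  shows "minors_ideal (n - 1) (gen_idx n) {..<2 * n} (jacobian n) = deg_ge (2 * n) (n - 1)"
proof (rule subset_antisym)
  show "minors_ideal (n - 1) (gen_idx n) {..<2 * n} (jacobian n) \<subseteq> deg_ge (2 * n) (n - 1)"
    by (rule minors_ideal_subset_deg_ge) (rule jacobian_in_deg_ge)
  show "deg_ge (2 * n) (n - 1) \<subseteq> minors_ideal (n - 1) (gen_idx n) {..<2 * n} (jacobian n)"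
    using assms prod_list_Var_in_jacobian_minors
    by (intro deg_ge_subset_ideal) (simp_all add: minors_ideal_def is_ideal_ideal_gen)
qed

theorem mainTheorem11:
  fixes n :: nat
  assumes "n \<ge> 3"
  defines "J \<equiv> ideal_gen (gmin2 n ` gen_idx n) :: 'a::field_char_0 mpoly set"
  defines "Jac \<equiv> minors_ideal (n - 1) (gen_idx n) {..<2*n} (jacobian n) :: 'a mpoly set"
  defines "I \<equiv> ideal_add J Jac"
  shows "Jac = ideal_pow (ideal_gen (Var ` {..<2*n})) (n - 1) \<and> aluffi_torsion_free J I"
proof
  have Jac: "Jac = deg_ge (2 * n) (n - 1)"
    unfolding Jac_def using assms(1) by (intro jacobian_minors_ideal_eq_deg_ge) simp
  then show "Jac = ideal_pow (ideal_gen (Var ` {..<2*n})) (n - 1)"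
    by (simp add: deg_ge_eq_ideal_pow var_ideal_def)
  have "\<And>g. g \<in> gmin2 n ` gen_idx n \<Longrightarrow> homogeneous (2 * n) 2 g"
    by (auto simp: gen_idx_def intro: gmin2_homogeneous)
  then show "aluffi_torsion_free J I"
    unfolding I_def Jac J_def using assms(1) by (intro aluffi_torsion_free_ideal_add_deg_ge[where e = 2]) auto
qed

end
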